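(* For any object $(E,\sigma)$ of $\mathrm{OS}_B$, the poset $E^\star$ is Noetherian, i.e. every upward-closed subset of $E^\star$ has only finitely many minimal elements.
   Context: An object of $\mathrm{OS}_B$ is a pair $(E,\sigma)$ with $E$ a totally ordered finite set and $\sigma$ an order-reversing involution with a unique fixed point; write $-e:=\sigma(e)$. $E^\star$ is the set of finite words in the alphabet $E$, partially ordered by: $e_1\cdots e_m\le f_1\cdots f_n$ iff there is a strictly increasing map $\theta:[m]\to[n]$ such that $e_i=f_{\theta(i)}$ for all $i\in[m]$, and for every $j\in[n]$ there exists $i\in[m]$ with $\theta(i)\le j$ and $f_{\theta(i)}\in\{f_j,-f_j\}$. (That is, the first word is a subword of the second containing the first occurrence of every $\sigma$-orbit appearing in the second.) *)

theory Defs
  imports Main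
begin

text \<open>An object (E, sigma) of OS_B: E a finite totally ordered set (the total order is
the ambient linorder on the type restricted to E), sigma an order-reversing involution
of E with a unique fixed point.\<close>
definition OS_B_obj :: "'a::linorder set \<Rightarrow> ('a \<Rightarrow> 'a) \<Rightarrow> bool" where
  "OS_B_obj E \<sigma> \<longleftrightarrow>
     finite E \<and> \<sigma> ` E \<subseteq> E \<and> (\<forall>e\<in>E. \<sigma> (\<sigma> e) = e) \<and>
     (\<forall>x\<in>E. \<forall>y\<in>E. x \<le> y \<longrightarrow> \<sigma> y \<le> \<sigma> x) \<and>
     (\<exists>!e. e \<in> E \<and> \<sigma> e = e)"

definition word_le :: "('a \<Rightarrow> 'a) \<Rightarrow> 'a list \<Rightarrow> 'a list \<Rightarrow> bool" where
  "word_le \<sigma> u w \<longleftrightarrow>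
     (\<exists>\<theta> :: nat \<Rightarrow> nat.
        (\<forall>i<length u. \<theta> i < length w) \<and>
        (\<forall>i<length u. \<forall>i'<length u. i < i' \<longrightarrow> \<theta> i < \<theta> i') \<and>
        (\<forall>i<length u. u ! i = w ! (\<theta> i)) \<and>
        (\<forall>j<length w. \<exists>i<length u. \<theta> i \<le> j \<and> w ! (\<theta> i) \<in> {w ! j, \<sigma> (w ! j)}))"

definition upward_closed_words :: "'a set \<Rightarrow> ('a \<Rightarrow> 'a) \<Rightarrow> 'a list set \<Rightarrow> bool" where
  "upward_closed_words E \<sigma> U \<longleftrightarrow>
     U \<subseteq> lists E \<and> (\<forall>u\<in>U. \<forall>w\<in>lists E. word_le \<sigma> u w \<longrightarrow> w \<in> U)"

definition minimal_words :: "('a \<Rightarrow> 'a) \<Rightarrow> 'a list set \<Rightarrow> 'a list set" where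
  "minimal_words \<sigma> U = {u \<in> U. \<forall>v\<in>U. word_le \<sigma> v u \<longrightarrow> v = u}"

end

theory Submission
  imports Defs "HOL-Library.Sublist" "HOL-Library.Infinite_Set"
begin

text \<open>Mark every letter of a word by whether it is the first occurrence of its
\<sigma>-orbit. If the marked word of u is a subsequence of the marked word of w and both words
contain the same number of orbits, the embedding hits every first occurrence of an orbit of w,
which is exactly the extra condition in the order on E-star. Given an infinite set of minimal
elements, pigeonhole on the number of orbits and Higman's lemma for the finite alphabet
E \<times> bool (proved by Nash-Williams' minimal bad sequence argument) then yield two comparable,
hence equal, minimal elements.\<close>

definition bad :: "(nat \<Rightarrow> 'b list) \<Rightarrow> bool" where
  "bad f \<longleftrightarrow> (\<forall>i j. i < j \<longrightarrow> \<not> subseq (f i) (f j))"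

definition bad_prefix :: "'b set \<Rightarrow> 'b list list \<Rightarrow> bool" where
  "bad_prefix A ps \<longleftrightarrow>
     (\<exists>f. bad f \<and> (\<forall>i. set (f i) \<subseteq> A) \<and> (\<forall>i<length ps. f i = ps ! i))"

definition min_bad_next :: "'b set \<Rightarrow> 'b list list \<Rightarrow> 'b list" where
  "min_bad_next A ps = arg_min length (\<lambda>w. bad_prefix A (ps @ [w]))"

fun min_bad_prefix :: "'b set \<Rightarrow> nat \<Rightarrow> 'b list list" where
  "min_bad_prefix A 0 = []"
| "min_bad_prefix A (Suc n) = min_bad_prefix A n @ [min_bad_next A (min_bad_prefix A n)]"

definition min_bad_seq :: "'b set \<Rightarrow> nat \<Rightarrow> 'b list" where
  "min_bad_seq A i = min_bad_next A (min_bad_prefix A i)"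

lemma length_min_bad_prefix [simp]: "length (min_bad_prefix A n) = n"
  by (induction n) auto

lemma nth_min_bad_prefix: "i < n \<Longrightarrow> min_bad_prefix A n ! i = min_bad_seq A i"
  by (induction n) (auto simp: nth_append less_Suc_eq min_bad_seq_def)

lemma bad_prefix_snocI:
  assumes "bad g" "\<forall>i. set (g i) \<subseteq> A" "\<forall>i<length ps. g i = ps ! i"
  shows "bad_prefix A (ps @ [g (length ps)])"
  unfolding bad_prefix_def using assms
  by (metis less_Suc_eq length_append_singleton nth_append nth_append_length)

lemma min_bad_next:
  assumes "bad_prefix A ps"
  shows "bad_prefix A (ps @ [min_bad_next A ps])"
    and "bad_prefix A (ps @ [w]) \<Longrightarrow> length (min_bad_next A ps) \<le> length w"
proof -
  from assms obtain f where "bad f" "\<forall>i. set (f i) \<subseteq> A" "\<forall>i<length ps. f i = ps ! i"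
    unfolding bad_prefix_def by blast
  then have "bad_prefix A (ps @ [f (length ps)])" by (rule bad_prefix_snocI)
  from arg_min_nat_lemma[of "\<lambda>w. bad_prefix A (ps @ [w])", OF this]
  show "bad_prefix A (ps @ [min_bad_next A ps])"
    and "bad_prefix A (ps @ [w]) \<Longrightarrow> length (min_bad_next A ps) \<le> length w"
    unfolding min_bad_next_def by blast+
qed

lemma bad_prefix_min_bad_prefix:
  "bad_prefix A [] \<Longrightarrow> bad_prefix A (min_bad_prefix A n)"
  by (induction n) (auto dest: min_bad_next(1))

lemma minimal_bad_seq:
  assumes "bad f" "\<And>i. set (f i) \<subseteq> A"
  defines "m \<equiv> min_bad_seq A"
  shows "bad m" and "set (m i) \<subseteq> A"
    and "\<lbrakk>bad g; \<forall>i. set (g i) \<subseteq> A; \<forall>i<n. g i = m i\<rbrakk> \<Longrightarrow> length (m n) \<le> length (g n)"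
proof -
  have "bad_prefix A []" unfolding bad_prefix_def using assms by auto
  then have prefix: "bad_prefix A (min_bad_prefix A n)" for n
    by (rule bad_prefix_min_bad_prefix)
  have agree: "\<exists>g. bad g \<and> (\<forall>i. set (g i) \<subseteq> A) \<and> (\<forall>i<n. g i = m i)" for n
    using prefix[of n] nth_min_bad_prefix[of _ n A] unfolding bad_prefix_def m_def by auto
  show "bad m" unfolding bad_def
  proof (intro allI impI)
    fix i j :: nat assume "i < j"
    with agree[of "Suc j"] obtain g where "bad g" "g i = m i" "g j = m j" by auto
    with \<open>i < j\<close> show "\<not> subseq (m i) (m j)" unfolding bad_def by metis
  qed
  from agree[of "Suc i"] show "set (m i) \<subseteq> A" by (metis lessI)
  assume "bad g" "\<forall>i. set (g i) \<subseteq> A" "\<forall>i<n. g i = m i"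
  then have "bad_prefix A (min_bad_prefix A n @ [g n])"
    using bad_prefix_snocI[of g A "min_bad_prefix A n"] nth_min_bad_prefix[of _ n A]
    unfolding m_def by simp
  then show "length (m n) \<le> length (g n)"
    using min_bad_next(2)[OF prefix] unfolding m_def min_bad_seq_def by blast
qed

lemma bad_replace_by_tails:
  assumes bad: "bad m" and r: "strict_mono r" and tails: "\<And>k. m (r k) = c # t k"
  shows "bad (\<lambda>i. if i < r 0 then m i else t (i - r 0))"
  unfolding bad_def
proof (intro allI impI notI)
  fix i j :: nat
  assume "i < j" and sub: "subseq (if i < r 0 then m i else t (i - r 0))
                                 (if j < r 0 then m j else t (j - r 0))"
  have "r 0 \<le> r k" for k using r by (simp add: strict_mono_less_eq)
  consider "j < r 0" | "i < r 0" "r 0 \<le> j" | "r 0 \<le> i" by linarith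
  then show False
  proof cases
    case 1
    with \<open>i < j\<close> sub bad show False unfolding bad_def by auto
  next
    case 2
    with sub have "subseq (m i) (c # t (j - r 0))" by auto
    with 2 \<open>r 0 \<le> r (j - r 0)\<close> bad show False unfolding bad_def tails[symmetric] by auto
  next
    case 3
    with \<open>i < j\<close> sub have "subseq (c # t (i - r 0)) (c # t (j - r 0))" by auto
    moreover have "r (i - r 0) < r (j - r 0)" using 3 \<open>i < j\<close> r by (simp add: strict_mono_less)
    ultimately show False using bad unfolding bad_def tails[symmetric] by blast
  qed
qed

theorem higman_subseq:
  fixes f :: "nat \<Rightarrow> 'b list"
  assumes "finite A" and "\<And>i. set (f i) \<subseteq> A"
  shows "\<exists>i j. i < j \<and> subseq (f i) (f j)"
proof (rule ccontr)
  assume "\<not> ?thesis"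
  then have "bad f" unfolding bad_def by blast
  define m where "m = min_bad_seq A"
  note m = minimal_bad_seq[OF \<open>bad f\<close> assms(2), folded m_def]
  have m_ne: "m i \<noteq> []" for i
    using \<open>bad m\<close> unfolding bad_def by (metis lessI list_emb_Nil)
  then have m_Cons: "m i = hd (m i) # tl (m i)" for i by simp
  have "hd (m i) \<in> A" for i using m(2)[of i] m_Cons[of i] by (metis list.set_intros(1) subsetD)
  then have "infinite (UNIV :: nat set)" and "finite ((\<lambda>i. hd (m i)) ` UNIV)"
    using \<open>finite A\<close> by (auto intro: finite_subset[of _ A])
  from pigeonhole_infinite[OF this] obtain i0 where "infinite {i. hd (m i) = hd (m i0)}"
    by auto
  from infinite_enumerate[OF this] obtain r :: "nat \<Rightarrow> nat"
    where r: "strict_mono r" "\<And>k. hd (m (r k)) = hd (m i0)" by auto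
  define g where "g i = (if i < r 0 then m i else tl (m (r (i - r 0))))" for i
  have "bad g"
    unfolding g_def
    by (rule bad_replace_by_tails[OF \<open>bad m\<close> r(1), of "hd (m i0)" "\<lambda>k. tl (m (r k))"])
      (metis m_Cons r(2))
  moreover have "set (g i) \<subseteq> A" for i
    using m(2)[of i] m(2)[of "r (i - r 0)"] list.set_sel(2)[OF m_ne] unfolding g_def by auto
  moreover have "\<forall>i < r 0. g i = m i" unfolding g_def by simp
  ultimately have "length (m (r 0)) \<le> length (g (r 0))" by (intro m(3)) auto
  moreover have "length (g (r 0)) < length (m (r 0))" unfolding g_def using m_ne[of "r 0"] by simp
  ultimately show False by simp
qed

lemma subseq_index_map:
  "subseq xs ys \<Longrightarrow> \<exists>\<theta>. (\<forall>i<length xs. \<theta> i < length ys \<and> xs ! i = ys ! \<theta> i) \<and>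
     (\<forall>i<length xs. \<forall>i'<length xs. i < i' \<longrightarrow> \<theta> i < \<theta> i')"
proof (induction rule: list_emb.induct)
  case (list_emb_Nil ys)
  then show ?case by simp
next
  case (list_emb_Cons xs ys y)
  then obtain \<theta> where "\<forall>i<length xs. \<theta> i < length ys \<and> xs ! i = ys ! \<theta> i"
    "\<forall>i<length xs. \<forall>i'<length xs. i < i' \<longrightarrow> \<theta> i < \<theta> i'" by blast
  then show ?case by (intro exI[of _ "Suc \<circ> \<theta>"]) auto
next
  case (list_emb_Cons2 x y xs ys)
  then obtain \<theta> where "\<forall>i<length xs. \<theta> i < length ys \<and> xs ! i = ys ! \<theta> i"
    "\<forall>i<length xs. \<forall>i'<length xs. i < i' \<longrightarrow> \<theta> i < \<theta> i'" by blast
  with \<open>x = y\<close> show ?case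
    by (intro exI[of _ "case_nat 0 (Suc \<circ> \<theta>)"]) (auto simp: nth_Cons' less_Suc_eq_0_disj)
qed

definition orbit_first :: "('a \<Rightarrow> 'a) \<Rightarrow> 'a list \<Rightarrow> nat \<Rightarrow> bool" where
  "orbit_first \<sigma> w k \<longleftrightarrow> (\<forall>k'<k. w ! k' \<notin> {w ! k, \<sigma> (w ! k)})"

definition orbit_firsts :: "('a \<Rightarrow> 'a) \<Rightarrow> 'a list \<Rightarrow> nat set" where
  "orbit_firsts \<sigma> w = {k. k < length w \<and> orbit_first \<sigma> w k}"

definition mark_orbit_firsts :: "('a \<Rightarrow> 'a) \<Rightarrow> 'a list \<Rightarrow> ('a \<times> bool) list" where
  "mark_orbit_firsts \<sigma> w = map (\<lambda>k. (w ! k, orbit_first \<sigma> w k)) [0..<length w]"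

lemma length_mark_orbit_firsts [simp]: "length (mark_orbit_firsts \<sigma> w) = length w"
  by (simp add: mark_orbit_firsts_def)

lemma nth_mark_orbit_firsts [simp]:
  "k < length w \<Longrightarrow> mark_orbit_firsts \<sigma> w ! k = (w ! k, orbit_first \<sigma> w k)"
  by (simp add: mark_orbit_firsts_def)

lemma set_mark_orbit_firsts: "set (mark_orbit_firsts \<sigma> w) \<subseteq> set w \<times> UNIV"
  by (auto simp: mark_orbit_firsts_def)

lemma card_orbit_firsts_le: "card (orbit_firsts \<sigma> w) \<le> card (set w)"
proof (rule card_inj_on_le)
  show "inj_on ((!) w) (orbit_firsts \<sigma> w)"
    by (rule linorder_inj_onI') (auto simp: orbit_firsts_def orbit_first_def)
  show "(!) w ` orbit_firsts \<sigma> w \<subseteq> set w"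
    by (auto simp: orbit_firsts_def)
qed simp

lemma orbit_first_before:
  assumes inv: "\<forall>e\<in>set w. \<sigma> (\<sigma> e) = e" and "j < length w"
  shows "\<exists>j0\<le>j. j0 \<in> orbit_firsts \<sigma> w \<and> w ! j0 \<in> {w ! j, \<sigma> (w ! j)}"
proof -
  define P where "P k \<longleftrightarrow> w ! k \<in> {w ! j, \<sigma> (w ! j)}" for k
  define j0 where "j0 = (LEAST k. P k)"
  have "P j" unfolding P_def by simp
  then have "P j0" "j0 \<le> j" unfolding j0_def by (auto intro: LeastI Least_le)
  have "\<sigma> (\<sigma> (w ! j)) = w ! j" using inv \<open>j < length w\<close> by simp
  with \<open>P j0\<close> have "P k" if "w ! k \<in> {w ! j0, \<sigma> (w ! j0)}" for k
    using that unfolding P_def by auto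
  then have "orbit_first \<sigma> w j0"
    unfolding orbit_first_def j0_def using not_less_Least by blast
  with \<open>P j0\<close> \<open>j0 \<le> j\<close> \<open>j < length w\<close> show ?thesis
    unfolding orbit_firsts_def P_def by auto
qed

lemma word_le_if_subseq_marks:
  assumes inv: "\<forall>e\<in>set w. \<sigma> (\<sigma> e) = e"
    and sub: "subseq (mark_orbit_firsts \<sigma> u) (mark_orbit_firsts \<sigma> w)"
    and card: "card (orbit_firsts \<sigma> u) = card (orbit_firsts \<sigma> w)"
  shows "word_le \<sigma> u w"
proof -
  from subseq_index_map[OF sub] obtain \<theta> where
    "\<forall>i<length u. \<theta> i < length w \<and>
       mark_orbit_firsts \<sigma> u ! i = mark_orbit_firsts \<sigma> w ! \<theta> i"
    and mono: "\<forall>i<length u. \<forall>i'<length u. i < i' \<longrightarrow> \<theta> i < \<theta> i'"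
    by auto
  then have \<theta>: "\<forall>i<length u. \<theta> i < length w \<and> u ! i = w ! \<theta> i \<and>
      orbit_first \<sigma> u i = orbit_first \<sigma> w (\<theta> i)"
    by auto
  have "\<theta> ` orbit_firsts \<sigma> u \<subseteq> orbit_firsts \<sigma> w"
    using \<theta> by (auto simp: orbit_firsts_def)
  moreover have "inj_on \<theta> (orbit_firsts \<sigma> u)"
  proof (rule linorder_inj_onI')
    fix i j assume "i \<in> orbit_firsts \<sigma> u" "j \<in> orbit_firsts \<sigma> u" "i < j"
    then have "\<theta> i < \<theta> j" using mono unfolding orbit_firsts_def by simp
    then show "\<theta> i \<noteq> \<theta> j" by simp
  qed
  ultimately have onto: "\<theta> ` orbit_firsts \<sigma> u = orbit_firsts \<sigma> w"
    using card by (simp add: card_subset_eq card_image orbit_firsts_def)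
  have "\<exists>i<length u. \<theta> i \<le> j \<and> w ! \<theta> i \<in> {w ! j, \<sigma> (w ! j)}" if "j < length w" for j
  proof -
    from orbit_first_before[OF inv that] obtain j0 where
      "j0 \<le> j" "j0 \<in> \<theta> ` orbit_firsts \<sigma> u" "w ! j0 \<in> {w ! j, \<sigma> (w ! j)}"
      unfolding onto by blast
    then show ?thesis unfolding orbit_firsts_def by blast
  qed
  with \<theta> mono show ?thesis unfolding word_le_def by (intro exI[of _ \<theta>]) auto
qed

lemma good_word_le:
  fixes f :: "nat \<Rightarrow> 'a list"
  assumes "finite E" and inv: "\<forall>e\<in>E. \<sigma> (\<sigma> e) = e" and fE: "\<And>i. set (f i) \<subseteq> E"
  shows "\<exists>i j. i < j \<and> word_le \<sigma> (f i) (f j)"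
proof -
  have "card (orbit_firsts \<sigma> (f i)) \<le> card E" for i
    by (rule le_trans[OF card_orbit_firsts_le card_mono[OF \<open>finite E\<close> fE]])
  then have "infinite (UNIV :: nat set)" and "finite (range (\<lambda>i. card (orbit_firsts \<sigma> (f i))))"
    by (auto intro: finite_subset[of _ "{..card E}"])
  from pigeonhole_infinite[OF this] obtain i0
    where "infinite {i. card (orbit_firsts \<sigma> (f i)) = card (orbit_firsts \<sigma> (f i0))}" by auto
  from infinite_enumerate[OF this] obtain r :: "nat \<Rightarrow> nat" where r: "strict_mono r"
    and card: "\<And>k. card (orbit_firsts \<sigma> (f (r k))) = card (orbit_firsts \<sigma> (f i0))" by auto
  have "finite (E \<times> (UNIV :: bool set))" using \<open>finite E\<close> by simp
  moreover have "set (mark_orbit_firsts \<sigma> (f (r k))) \<subseteq> E \<times> UNIV" for k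
    using set_mark_orbit_firsts[of \<sigma> "f (r k)"] fE[of "r k"] by blast
  ultimately obtain k l where "k < l"
    and "subseq (mark_orbit_firsts \<sigma> (f (r k))) (mark_orbit_firsts \<sigma> (f (r l)))"
    using higman_subseq[of "E \<times> UNIV" "\<lambda>k. mark_orbit_firsts \<sigma> (f (r k))"] by blast
  moreover have "\<forall>e\<in>set (f (r l)). \<sigma> (\<sigma> e) = e" using inv fE[of "r l"] by blast
  ultimately have "word_le \<sigma> (f (r k)) (f (r l))"
    using card by (intro word_le_if_subseq_marks) auto
  moreover have "r k < r l" using \<open>k < l\<close> r by (simp add: strict_mono_less)
  ultimately show ?thesis by blast
qed

theorem mainTheorem7:
  fixes E :: "'a::linorder set" and \<sigma> :: "'a \<Rightarrow> 'a"
  assumes "OS_B_obj E \<sigma>"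
  shows "\<forall>U. upward_closed_words E \<sigma> U \<longrightarrow> finite (minimal_words \<sigma> U)"
proof (intro allI impI)
  fix U assume U: "upward_closed_words E \<sigma> U"
  show "finite (minimal_words \<sigma> U)"
  proof (rule ccontr)
    assume "infinite (minimal_words \<sigma> U)"
    from infinite_countable_subset[OF this] obtain s :: "nat \<Rightarrow> 'a list"
      where "inj s" and s: "\<And>i. s i \<in> minimal_words \<sigma> U" by blast
    have "set (s i) \<subseteq> E" for i
      using s[of i] U unfolding minimal_words_def upward_closed_words_def by auto
    moreover have "finite E" and "\<forall>e\<in>E. \<sigma> (\<sigma> e) = e"
      using assms unfolding OS_B_obj_def by auto
    ultimately obtain i j where "i < j" and "word_le \<sigma> (s i) (s j)"
      using good_word_le[of E \<sigma> s] by blast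
    with s[of i] s[of j] have "s i = s j" by (simp add: minimal_words_def)
    with \<open>inj s\<close> \<open>i < j\<close> show False by (simp add: inj_eq)
  qed
qed

end
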